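(* Let $A\in\mathbb{C}^{m\times n}$, $B\in\mathbb{C}^{n\times p}$, $C\in\mathbb{C}^{p\times q}$ and $M=ABC$. Then each of the following sets is contained in $\{M^{(1)}\}$: $\{(A^{(1)}M)^{(1)}A^{(1)}\}$, $\{C^{(1)}(MC^{(1)})^{(1)}\}$, $\{(A^{*}M)^{(1)}A^{*}\}$, $\{C^{*}(MC^{*})^{(1)}\}$, $\{(AA^{*}M)^{(1)}AA^{*}\}$, $\{C^{*}C(MC^{*}C)^{(1)}\}$, $\{C^{(1)}(A^{(1)}MC^{(1)})^{(1)}A^{(1)}\}$, $\{C^{*}(A^{*}MC^{*})^{(1)}A^{*}\}$, $\{[(AB)^{(1)}M]^{(1)}(AB)^{(1)}\}$, $\{(BC)^{(1)}[M(BC)^{(1)}]^{(1)}\}$, $\{[(AB)^{*}M]^{(1)}(AB)^{*}\}$, $\{(BC)^{*}[M(BC)^{*}]^{(1)}\}$, $\{[(ABB^{(1)})^{(1)}M]^{(1)}(ABB^{(1)})^{(1)}\}$, $\{(B^{(1)}BC)^{(1)}[M(B^{(1)}BC)^{(1)}]^{(1)}\}$, $\{[(ABB^{*})^{(1)}M]^{(1)}(ABB^{*})^{(1)}\}$, $\{(B^{*}BC)^{(1)}[M(B^{*}BC)^{(1)}]^{(1)}\}$, $\{C^{*}C(AA^{*}MC^{*}C)^{(1)}AA^{*}\}$, $\{(BC)^{(1)}[(AB)^{(1)}M(BC)^{(1)}]^{(1)}(AB)^{(1)}\}$, $\{(BC)^{*}[(AB)^{*}M(BC)^{*}]^{(1)}(AB)^{*}\}$,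 $\{(B^{(1)}BC)^{(1)}[(ABB^{(1)})^{(1)}M(B^{(1)}BC)^{(1)}]^{(1)}(ABB^{(1)})^{(1)}\}$, $\{(B^{*}BC)^{(1)}[(ABB^{*})^{(1)}M(B^{*}BC)^{(1)}]^{(1)}(ABB^{*})^{(1)}\}$, $\{(B^{(1)}BC)^{*}[(ABB^{(1)})^{*}M(B^{(1)}BC)^{*}]^{(1)}(ABB^{(1)})^{*}\}$, $\{(B^{*}BC)^{*}[(ABB^{*})^{*}M(B^{*}BC)^{*}]^{(1)}(ABB^{*})^{*}\}$.
   Context: For a complex matrix $X$, $X^*$ is its conjugate transpose. For $X\in\mathbb{C}^{p\times q}$, a matrix $G\in\mathbb{C}^{q\times p}$ is called an $\{i,\ldots,j\}$-generalized inverse of $X$ (written $X^{(i,\ldots,j)}$) if it satisfies the equations numbered $i,\ldots,j$ among the four Penrose equations (i) $XGX=X$, (ii) $GXG=G$, (iii) $(XG)^*=XG$, (iv) $(GX)^*=GX$; $\{X^{(i,\ldots,j)}\}$ denotes the set of all such $G$. For a matrix expression involving generalized inverses, $\{\cdot\}$ denotes the set of all values of the expression as each generalized inverse occurring in it ranges over all admissible choices; repeated occurrences of the same symbol (e.g. $(AB)^{(1)}$ appearing twice) denote one and the same choice, and a generalized inverse of a matrix that itself contains a chosen generalized inverse is taken with respect to that chosen matrix. *)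

theory Defs
  imports "HOL-Analysis.Analysis"
begin

definition ctrans :: "complex^'n^'m \<Rightarrow> complex^'m^'n" where
  "ctrans X = (\<chi> i j. cnj (X $ j $ i))"

definition g1 :: "complex^'n^'m \<Rightarrow> (complex^'m^'n) set" where
  "g1 X = {G. X ** G ** X = X}"

end

theory Submission
  imports Defs
begin

text \<open>
  If \<open>M = S L M\<close> and \<open>M = M R T\<close> for some \<open>S\<close>, \<open>T\<close>, then every \<open>{1}\<close>-inverse \<open>X\<close> of
  \<open>L M R\<close> gives a \<open>{1}\<close>-inverse \<open>R X L\<close> of \<open>M\<close>, since
  \<open>M R X L M = S (L M R) X (L M R) T = S L M R T = M\<close>.  In each of the 23 sets, \<open>L\<close> is a
  \<open>{1}\<close>-inverse \<open>K\<^sup>-\<close>, the adjoint \<open>K\<^sup>*\<close> or the Gram matrix \<open>K K\<^sup>*\<close> of a left factor \<open>K\<close> of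
  \<open>M\<close> (and dually for \<open>R\<close>), so it suffices that \<open>K = S L K\<close> for some \<open>S\<close>.  For \<open>K\<^sup>-\<close> take
  \<open>S = K\<close>; for \<open>K\<^sup>*\<close> this says that \<open>K\<^sup>* K\<close> has the row space of \<open>K\<close>, which follows from
  \<open>E\<^sup>* E = 0 \<Longrightarrow> E = 0\<close>; the Gram matrix is handled by composing the two.
\<close>

definition left_invertible_on :: "'a::semiring_1^'m^'k \<Rightarrow> 'a^'n^'m \<Rightarrow> bool" where
  "left_invertible_on L M \<longleftrightarrow> (\<exists>S. S ** L ** M = M)"

definition right_invertible_on :: "'a::semiring_1^'k^'n \<Rightarrow> 'a^'n^'m \<Rightarrow> bool" where
  "right_invertible_on R M \<longleftrightarrow> (\<exists>T. M ** R ** T = M)"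

lemma g1_sandwich:
  assumes X: "X \<in> g1 (L ** M ** R)"
    and L: "left_invertible_on L M" and R: "right_invertible_on R M"
  shows "R ** X ** L \<in> g1 M"
proof -
  obtain S T where S: "S ** L ** M = M" and T: "M ** R ** T = M"
    using L R unfolding left_invertible_on_def right_invertible_on_def by blast
  have "M ** (R ** X ** L) ** M = (S ** L ** M) ** (R ** X ** L) ** (M ** R ** T)"
    by (simp only: S T)
  also have "\<dots> = S ** (L ** M ** R ** X ** (L ** M ** R)) ** T"
    by (simp add: matrix_mul_assoc)
  also have "\<dots> = S ** L ** M ** R ** T"
    using X by (simp add: g1_def matrix_mul_assoc)
  also have "\<dots> = M"
    by (simp add: S T)
  finally show ?thesis
    by (simp add: g1_def)
qed

lemma left_invertible_on_mat_1 [simp]: "left_invertible_on (mat 1) M"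
  unfolding left_invertible_on_def by (metis matrix_mul_lid)

lemma right_invertible_on_mat_1 [simp]: "right_invertible_on (mat 1) M"
  unfolding right_invertible_on_def by (metis matrix_mul_rid)

lemma g1_mult_left:
  "X \<in> g1 (L ** M) \<Longrightarrow> left_invertible_on L M \<Longrightarrow> X ** L \<in> g1 M"
  using g1_sandwich[of X L M "mat 1"] by simp

lemma g1_mult_right:
  "X \<in> g1 (M ** R) \<Longrightarrow> right_invertible_on R M \<Longrightarrow> R ** X \<in> g1 M"
  using g1_sandwich[of X "mat 1" M R] by simp

lemma left_invertible_on_left_factor:
  assumes "M = K ** N" and "left_invertible_on L K"
  shows "left_invertible_on L M"
proof -
  obtain S where "S ** L ** K = K"
    using assms(2) unfolding left_invertible_on_def by blast
  then have "S ** L ** M = M"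
    by (simp add: assms(1) matrix_mul_assoc)
  then show ?thesis
    unfolding left_invertible_on_def by blast
qed

lemma right_invertible_on_right_factor:
  assumes "M = N ** K" and "right_invertible_on R K"
  shows "right_invertible_on R M"
proof -
  obtain T where "K ** R ** T = K"
    using assms(2) unfolding right_invertible_on_def by blast
  then have "M ** R ** T = M"
    by (simp add: assms(1) flip: matrix_mul_assoc)
  then show ?thesis
    unfolding right_invertible_on_def by blast
qed

lemma left_invertible_on_mult:
  assumes "left_invertible_on L\<^sub>1 (L\<^sub>2 ** M)" and "left_invertible_on L\<^sub>2 M"
  shows "left_invertible_on (L\<^sub>1 ** L\<^sub>2) M"
proof -
  obtain S\<^sub>1 S\<^sub>2 where "S\<^sub>1 ** L\<^sub>1 ** (L\<^sub>2 ** M) = L\<^sub>2 ** M" and "S\<^sub>2 ** L\<^sub>2 ** M = M"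
    using assms unfolding left_invertible_on_def by blast
  then have "S\<^sub>2 ** S\<^sub>1 ** (L\<^sub>1 ** L\<^sub>2) ** M = M"
    by (metis matrix_mul_assoc)
  then show ?thesis
    unfolding left_invertible_on_def by blast
qed

lemma left_invertible_on_g1: "G \<in> g1 K \<Longrightarrow> left_invertible_on G K"
  unfolding left_invertible_on_def g1_def by blast

lemma right_invertible_on_g1: "G \<in> g1 K \<Longrightarrow> right_invertible_on G K"
  unfolding right_invertible_on_def g1_def by (auto simp flip: matrix_mul_assoc)

lemma ctrans_mult: "ctrans (X ** Y) = ctrans Y ** ctrans X"
  by (simp add: ctrans_def matrix_matrix_mult_def vec_eq_iff mult.commute)

lemma ctrans_ctrans [simp]: "ctrans (ctrans X) = X"
  by (simp add: ctrans_def vec_eq_iff)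

lemma ctrans_diff: "ctrans (X - Y) = ctrans X - ctrans Y"
  by (simp add: ctrans_def vec_eq_iff)

lemma matrix_diff_rdistrib: "(X - Y) ** (Z::'a::ring_1^_^_) = X ** Z - Y ** Z"
  by (simp add: matrix_matrix_mult_def vec_eq_iff sum_subtractf algebra_simps)

lemma matrix_diff_ldistrib: "(Z::'a::ring_1^_^_) ** (X - Y) = Z ** X - Z ** Y"
  by (simp add: matrix_matrix_mult_def vec_eq_iff sum_subtractf algebra_simps)

lemma ctrans_mult_self_eq_0_iff: "ctrans E ** E = 0 \<longleftrightarrow> E = 0"
proof
  assume E: "ctrans E ** E = 0"
  have "E $ i $ j = 0" for i j
  proof -
    have "complex_of_real (\<Sum>k\<in>UNIV. (cmod (E $ k $ j))\<^sup>2) = (ctrans E ** E) $ j $ j"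
      by (simp add: ctrans_def matrix_matrix_mult_def complex_norm_square mult.commute
          del: of_real_power)
    then have "(\<Sum>k\<in>UNIV. (cmod (E $ k $ j))\<^sup>2) = 0"
      using E by (simp only: zero_index of_real_eq_0_iff)
    then show ?thesis
      by (simp add: sum_nonneg_eq_0_iff)
  qed
  then show "E = 0" by (simp add: vec_eq_iff)
qed simp

lemma right_invertible_on_iff_ctrans:
  "right_invertible_on R M \<longleftrightarrow> left_invertible_on (ctrans R) (ctrans M)"
  unfolding right_invertible_on_def left_invertible_on_def
  by (metis ctrans_ctrans ctrans_mult matrix_mul_assoc)

lemma g1_nonempty: "g1 N \<noteq> {}"
proof -
  let ?f = "\<lambda>x. N *v x"
  have "vector_space_pair ((*s) :: complex \<Rightarrow> complex^'n \<Rightarrow> _) ((*s) :: complex \<Rightarrow> complex^'m \<Rightarrow> _)"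
    by unfold_locales
  from vector_space_pair.linear_exists_right_inverse_on[OF this _ vec.subspace_UNIV, of ?f]
  obtain g where g: "Vector_Spaces.linear (*s) (*s) g" "\<forall>v\<in>range ?f. ?f (g v) = v"
    by auto
  have "N ** matrix g ** N = N"
    unfolding matrix_eq
  proof
    fix x
    have "(N ** matrix g ** N) *v x = N *v g (N *v x)"
      using g(1) by (simp flip: matrix_vector_mul_assoc)
    then show "(N ** matrix g ** N) *v x = N *v x"
      using g(2) by simp
  qed
  then show ?thesis
    unfolding g1_def by blast
qed

text \<open>
  With \<open>Y = K\<^sup>* K\<close> and \<open>G \<in> g1 Y\<close>, the matrix \<open>P = K G Y\<close> satisfies \<open>K\<^sup>* P = P\<^sup>* K = P\<^sup>* P = Y\<close>,
  so \<open>(P - K)\<^sup>* (P - K) = 0\<close> and hence \<open>K = (K G) K\<^sup>* K\<close>.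
\<close>
lemma left_invertible_on_ctrans: "left_invertible_on (ctrans K) K"
proof -
  define Y where "Y = ctrans K ** K"
  obtain G where G: "Y ** G ** Y = Y"
    using g1_nonempty unfolding g1_def by blast
  have Y_herm: "ctrans Y = Y"
    by (simp add: Y_def ctrans_mult)
  have G': "Y ** ctrans G ** Y = Y"
    using arg_cong[OF G, of ctrans] by (simp add: ctrans_mult Y_herm matrix_mul_assoc)
  define P where "P = K ** G ** Y"
  have KP: "ctrans K ** P = Y"
    by (metis G P_def Y_def matrix_mul_assoc)
  have PK: "ctrans P ** K = Y"
    by (metis G' Y_def Y_herm P_def ctrans_mult matrix_mul_assoc)
  have PP: "ctrans P ** P = Y"
    by (metis G P_def PK matrix_mul_assoc)
  have "ctrans (P - K) ** (P - K) = 0"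
    unfolding ctrans_diff matrix_diff_rdistrib matrix_diff_ldistrib KP PK PP Y_def by simp
  then have "K ** G ** ctrans K ** K = K"
    by (simp add: ctrans_mult_self_eq_0_iff P_def Y_def matrix_mul_assoc)
  then show ?thesis
    unfolding left_invertible_on_def by blast
qed

lemma right_invertible_on_ctrans: "right_invertible_on (ctrans K) K"
  unfolding right_invertible_on_iff_ctrans by (rule left_invertible_on_ctrans)

lemma left_invertible_on_gram: "left_invertible_on (K ** ctrans K) K"
proof (rule left_invertible_on_mult)
  have "left_invertible_on K (ctrans K)"
    using left_invertible_on_ctrans[of "ctrans K"] by simp
  then show "left_invertible_on K (ctrans K ** K)"
    by (rule left_invertible_on_left_factor[OF refl])
qed (rule left_invertible_on_ctrans)

lemma right_invertible_on_gram: "right_invertible_on (ctrans K ** K) K"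
  unfolding right_invertible_on_iff_ctrans
  using left_invertible_on_gram[of "ctrans K"] by (simp add: ctrans_mult)

theorem theorem3p3:
  fixes A :: "complex^'n^'m" and B :: "complex^'p^'n" and C :: "complex^'q^'p"
    and M :: "complex^'q^'m"
  assumes hM: "M = A ** B ** C"
  shows
   "({X ** A1 | A1 X. A1 \<in> g1 A \<and> X \<in> g1 (A1 ** M)} \<subseteq> g1 M)
  \<and> ({C1 ** X | C1 X. C1 \<in> g1 C \<and> X \<in> g1 (M ** C1)} \<subseteq> g1 M)
  \<and> ({X ** ctrans A | X. X \<in> g1 (ctrans A ** M)} \<subseteq> g1 M)
  \<and> ({ctrans C ** X | X. X \<in> g1 (M ** ctrans C)} \<subseteq> g1 M)
  \<and> ({X ** (A ** ctrans A) | X. X \<in> g1 (A ** ctrans A ** M)} \<subseteq> g1 M)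
  \<and> ({ctrans C ** C ** X | X. X \<in> g1 (M ** ctrans C ** C)} \<subseteq> g1 M)
  \<and> ({C1 ** X ** A1 | C1 A1 X. C1 \<in> g1 C \<and> A1 \<in> g1 A \<and> X \<in> g1 (A1 ** M ** C1)} \<subseteq> g1 M)
  \<and> ({ctrans C ** X ** ctrans A | X. X \<in> g1 (ctrans A ** M ** ctrans C)} \<subseteq> g1 M)
  \<and> ({X ** G | G X. G \<in> g1 (A ** B) \<and> X \<in> g1 (G ** M)} \<subseteq> g1 M)
  \<and> ({H ** X | H X. H \<in> g1 (B ** C) \<and> X \<in> g1 (M ** H)} \<subseteq> g1 M)
  \<and> ({X ** ctrans (A ** B) | X. X \<in> g1 (ctrans (A ** B) ** M)} \<subseteq> g1 M)
  \<and> ({ctrans (B ** C) ** X | X. X \<in> g1 (M ** ctrans (B ** C))} \<subseteq> g1 M)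
  \<and> ({X ** G | B1 G X. B1 \<in> g1 B \<and> G \<in> g1 (A ** B ** B1) \<and> X \<in> g1 (G ** M)} \<subseteq> g1 M)
  \<and> ({H ** X | B1 H X. B1 \<in> g1 B \<and> H \<in> g1 (B1 ** B ** C) \<and> X \<in> g1 (M ** H)} \<subseteq> g1 M)
  \<and> ({X ** G | G X. G \<in> g1 (A ** B ** ctrans B) \<and> X \<in> g1 (G ** M)} \<subseteq> g1 M)
  \<and> ({H ** X | H X. H \<in> g1 (ctrans B ** B ** C) \<and> X \<in> g1 (M ** H)} \<subseteq> g1 M)
  \<and> ({ctrans C ** C ** X ** (A ** ctrans A) | X.
       X \<in> g1 (A ** ctrans A ** M ** ctrans C ** C)} \<subseteq> g1 M)
  \<and> ({H ** X ** G | G H X. G \<in> g1 (A ** B) \<and> H \<in> g1 (B ** C) \<and> X \<in> g1 (G ** M ** H)}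
       \<subseteq> g1 M)
  \<and> ({ctrans (B ** C) ** X ** ctrans (A ** B) | X.
       X \<in> g1 (ctrans (A ** B) ** M ** ctrans (B ** C))} \<subseteq> g1 M)
  \<and> ({H ** X ** G | B1 G H X. B1 \<in> g1 B \<and> G \<in> g1 (A ** B ** B1) \<and>
       H \<in> g1 (B1 ** B ** C) \<and> X \<in> g1 (G ** M ** H)} \<subseteq> g1 M)
  \<and> ({H ** X ** G | G H X. G \<in> g1 (A ** B ** ctrans B) \<and> H \<in> g1 (ctrans B ** B ** C) \<and>
       X \<in> g1 (G ** M ** H)} \<subseteq> g1 M)
  \<and> ({ctrans (B1 ** B ** C) ** X ** ctrans (A ** B ** B1) | B1 X. B1 \<in> g1 B \<and>
       X \<in> g1 (ctrans (A ** B ** B1) ** M ** ctrans (B1 ** B ** C))} \<subseteq> g1 M)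
  \<and> ({ctrans (ctrans B ** B ** C) ** X ** ctrans (A ** B ** ctrans B) | X.
       X \<in> g1 (ctrans (A ** B ** ctrans B) ** M ** ctrans (ctrans B ** B ** C))} \<subseteq> g1 M)"
proof -
  obtain S T where S: "S ** ctrans B ** B = B" and T: "B ** ctrans B ** T = B"
    using left_invertible_on_ctrans[of B] right_invertible_on_ctrans[of B]
    unfolding left_invertible_on_def right_invertible_on_def by blast
  have factorizations:
    "M = A ** (B ** C)" "M = (A ** B) ** C"
    "B1 \<in> g1 B \<Longrightarrow> M = (A ** B ** B1) ** (B ** C)"
    "B1 \<in> g1 B \<Longrightarrow> M = (A ** B) ** (B1 ** B ** C)"
    "M = (A ** B ** ctrans B) ** (T ** C)" "M = (A ** S) ** (ctrans B ** B ** C)"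
    for B1
    using hM unfolding g1_def by (simp_all add: matrix_mul_assoc) (metis S T matrix_mul_assoc)+
  have g1_assoc:
    "g1 (M ** ctrans C ** C) = g1 (M ** (ctrans C ** C))"
    "g1 (A ** ctrans A ** M ** ctrans C ** C) = g1 (A ** ctrans A ** M ** (ctrans C ** C))"
    by (simp_all add: matrix_mul_assoc)
  show ?thesis
    by (intro conjI; auto simp: g1_assoc intro: g1_sandwich g1_mult_left g1_mult_right
        factorizations[THEN left_invertible_on_left_factor]
        factorizations[THEN right_invertible_on_right_factor]
        left_invertible_on_g1 left_invertible_on_ctrans left_invertible_on_gram
        right_invertible_on_g1 right_invertible_on_ctrans right_invertible_on_gram)
qed

end
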